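(* Let $a,b,c,d>0$, $\theta>0$ satisfy $-(\theta a+\theta^2 b)<(\theta-1)(\theta+1)^2<\theta c+\theta^2 d$, let $\mu\in(0,1]$, and consider on $\mathcal{I}=[0,1]^2$ the system $$\dot x=x(1-x)\big[xr(-c+d-a+b)+x(a-b)-r(d+b)+b\big]+\mu(1-2x),\qquad \dot r=r(1-r)\big[\theta x-(1-x)\big].$$ Then the system has exactly one equilibrium on the side $\mathcal{B}_b=\{(x,0):x\in[0,1]\}$ and exactly one equilibrium on the side $\mathcal{B}_t=\{(x,1):x\in[0,1]\}$. Moreover, the equilibrium on $\mathcal{B}_b$ lies in $\{(x,0): x\in(\max\{1/2,1/(\theta+1)\},1)\}$ and the equilibrium on $\mathcal{B}_t$ lies in $\{(x,1): x\in(0,\min\{1/2,1/(\theta+1)\})\}$. *)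

theory Defs
  imports Complex_Main
begin

definition xdot :: "real \<Rightarrow> real \<Rightarrow> real \<Rightarrow> real \<Rightarrow> real \<Rightarrow> real \<Rightarrow> real \<Rightarrow> real" where
  "xdot a b c d \<mu> x r =
     x * (1 - x) * (x * r * (- c + d - a + b) + x * (a - b) - r * (d + b) + b) + \<mu> * (1 - 2 * x)"

definition rdot :: "real \<Rightarrow> real \<Rightarrow> real \<Rightarrow> real" where
  "rdot \<theta> x r = r * (1 - r) * (\<theta> * x - (1 - x))"

definition is_equilibrium ::
  "real \<Rightarrow> real \<Rightarrow> real \<Rightarrow> real \<Rightarrow> real \<Rightarrow> real \<Rightarrow> real \<Rightarrow> real \<Rightarrow> bool" where
  "is_equilibrium a b c d \<theta> \<mu> x r \<longleftrightarrow>
     x \<in> {0..1} \<and> r \<in> {0..1} \<and> xdot a b c d \<mu> x r = 0 \<and> rdot \<theta> x r = 0"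

end

theory Submission
  imports Defs
begin

text \<open>On both horizontal sides \<open>rdot\<close> vanishes identically, and after the reflection
  \<open>x \<mapsto> 1 - x\<close> on the top side, \<open>xdot\<close> becomes the cubic
  \<open>F x = x (1 - x) (x a + (1 - x) b) + \<mu> (1 - 2 x)\<close> with positive \<open>a\<close>, \<open>b\<close>.
  \<open>F\<close> is positive on \<open>[0, 1/2]\<close> and \<open>F 1 = -\<mu>\<close>, so its zeros in \<open>[0, 1]\<close> lie in \<open>(1/2, 1)\<close>,
  where \<open>F x = (2 x - 1) (R x - \<mu>)\<close> with \<open>R x = x (1 - x) (x a + (1 - x) b) / (2 x - 1)\<close>.
  Since \<open>R\<close> is strictly decreasing there, \<open>F\<close> has exactly one zero, and it lies to the right of
  every point where \<open>F\<close> is positive. The hypotheses on \<open>\<theta>\<close> say precisely that \<open>F\<close> is positive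
  at \<open>1/(\<theta> + 1)\<close> on the bottom side and at the reflected point \<open>\<theta>/(\<theta> + 1)\<close> on the top side.\<close>

definition edge_field :: "real \<Rightarrow> real \<Rightarrow> real \<Rightarrow> real \<Rightarrow> real" where
  "edge_field a b \<mu> x = x * (1 - x) * (x * a + (1 - x) * b) + \<mu> * (1 - 2 * x)"

definition edge_ratio :: "real \<Rightarrow> real \<Rightarrow> real \<Rightarrow> real" where
  "edge_ratio a b x = x * (1 - x) * (x * a + (1 - x) * b) / (2 * x - 1)"

lemma is_equilibrium_bottom_iff:
  "is_equilibrium a b c d \<theta> \<mu> x 0 \<longleftrightarrow> x \<in> {0..1} \<and> edge_field a b \<mu> x = 0"
  by (simp add: is_equilibrium_def xdot_def rdot_def edge_field_def algebra_simps)

lemma is_equilibrium_top_iff: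
  "is_equilibrium a b c d \<theta> \<mu> x 1 \<longleftrightarrow> 1 - x \<in> {0..1} \<and> edge_field d c \<mu> (1 - x) = 0"
proof -
  have "xdot a b c d \<mu> x 1 = - edge_field d c \<mu> (1 - x)"
    by (simp add: xdot_def edge_field_def algebra_simps)
  then show ?thesis
    by (auto simp: is_equilibrium_def rdot_def)
qed

lemma edge_field_root_exists:
  assumes "\<mu> \<ge> 0"
  obtains x where "x \<in> {0..1}" "edge_field a b \<mu> x = 0"
proof -
  have cont: "continuous_on {0..1} (edge_field a b \<mu>)"
    unfolding edge_field_def by (intro continuous_intros)
  have "\<exists>x. 0 \<le> x \<and> x \<le> 1 \<and> edge_field a b \<mu> x = 0"
    by (rule IVT2'[OF _ _ _ cont]) (use assms in \<open>auto simp: edge_field_def\<close>)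
  then show ?thesis
    using that by auto
qed

lemma edge_field_root_bounds:
  assumes "a > 0" "b > 0" "\<mu> > 0" "x \<in> {0..1}" "edge_field a b \<mu> x = 0"
  shows "1/2 < x" "x < 1"
proof -
  show "x < 1"
    using assms by (cases "x = 1") (auto simp: edge_field_def)
  show "1/2 < x"
  proof (rule ccontr)
    assume "\<not> 1/2 < x"
    then have "x \<le> 1/2" by simp
    moreover have "x \<noteq> 0"
      using assms by (auto simp: edge_field_def)
    ultimately have "x * (1 - x) * (x * a + (1 - x) * b) > 0" "\<mu> * (1 - 2 * x) \<ge> 0"
      using assms by (auto intro!: mult_pos_pos add_pos_nonneg)
    then show False
      using assms(5) by (simp add: edge_field_def)
  qed
qed

lemma edge_field_eq_edge_ratio:
  assumes "x \<noteq> 1/2"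
  shows "edge_field a b \<mu> x = (2 * x - 1) * (edge_ratio a b x - \<mu>)"
  using assms by (simp add: edge_field_def edge_ratio_def field_simps)

lemma has_real_derivative_edge_ratio:
  assumes "x \<noteq> 1/2"
  shows "(edge_ratio a b has_real_derivative
          - (a * x * (4 * x^2 - 5 * x + 2) + b * (1 - x) * (4 * x^2 - 3 * x + 1)) / (2 * x - 1)^2)
         (at x)"
proof -
  have "2 * x - 1 \<noteq> 0"
    using assms by simp
  then show ?thesis
    unfolding edge_ratio_def [abs_def]
    by (auto intro!: derivative_eq_intros simp: field_simps power2_eq_square)
qed

lemma strict_antimono_on_edge_ratio:
  assumes "a > 0" "b > 0"
  shows "strict_antimono_on {1/2<..<1} (edge_ratio a b)"
proof (rule monotone_onI)
  fix x y :: real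
  assume "x \<in> {1/2<..<1}" "y \<in> {1/2<..<1}" "x < y"
  show "edge_ratio a b y < edge_ratio a b x"
  proof (rule DERIV_neg_imp_decreasing[OF \<open>x < y\<close>])
    fix t assume "x \<le> t" "t \<le> y"
    with \<open>x \<in> _\<close> \<open>y \<in> _\<close> have t: "1/2 < t" "t < 1" by auto
    have "4 * t^2 - 5 * t + 2 = 4 * (t - 5/8)^2 + 7/16"
         "4 * t^2 - 3 * t + 1 = 4 * (t - 3/8)^2 + 7/16"
      by (simp_all add: algebra_simps power2_eq_square)
    then have "4 * t^2 - 5 * t + 2 > 0" "4 * t^2 - 3 * t + 1 > 0"
      by (simp_all add: add_nonneg_pos)
    with t assms have "a * t * (4 * t^2 - 5 * t + 2) + b * (1 - t) * (4 * t^2 - 3 * t + 1) > 0"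
      by (simp add: add_pos_pos)
    moreover have "(2 * t - 1)^2 > 0"
      using t by simp
    ultimately show "\<exists>D. (edge_ratio a b has_real_derivative D) (at t) \<and> D < 0"
      using t has_real_derivative_edge_ratio[of t a b] by (auto simp: divide_neg_pos)
  qed
qed

lemma edge_field_root_unique:
  assumes "a > 0" "b > 0" "\<mu> > 0"
    and "x \<in> {0..1}" "edge_field a b \<mu> x = 0"
    and "y \<in> {0..1}" "edge_field a b \<mu> y = 0"
  shows "x = y"
proof -
  have "x \<in> {1/2<..<1}" "y \<in> {1/2<..<1}"
    using edge_field_root_bounds assms by auto
  moreover from this have "edge_ratio a b x = edge_ratio a b y"
    using assms by (simp add: edge_field_eq_edge_ratio)
  ultimately show ?thesis
    using strict_antimono_on_edge_ratio[OF assms(1,2)]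
    by (auto simp: strict_antimono_iff_antimono inj_on_def)
qed

lemma edge_field_pos_imp_less_root:
  assumes "a > 0" "b > 0" "\<mu> > 0"
    and "x\<^sub>0 \<le> 1" "edge_field a b \<mu> x\<^sub>0 > 0"
    and "x \<in> {0..1}" "edge_field a b \<mu> x = 0"
  shows "x\<^sub>0 < x"
proof (cases "x\<^sub>0 \<le> 1/2")
  case True
  then show ?thesis
    using edge_field_root_bounds(1)[OF assms(1-3,6,7)] by simp
next
  case False
  have "x\<^sub>0 \<noteq> 1"
    using assms(3,5) by (auto simp: edge_field_def)
  with False assms(4) have x\<^sub>0: "x\<^sub>0 \<in> {1/2<..<1}" by simp
  have x: "x \<in> {1/2<..<1}"
    using edge_field_root_bounds[OF assms(1-3,6,7)] by simp
  have "edge_ratio a b x < edge_ratio a b x\<^sub>0"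
    using assms(5,7) x x\<^sub>0 by (simp add: edge_field_eq_edge_ratio zero_less_mult_iff)
  then show ?thesis
    using monotone_onD[OF strict_antimono_on_edge_ratio[OF assms(1,2)] x x\<^sub>0]
    by (cases x x\<^sub>0 rule: linorder_cases) auto
qed

lemma edge_field_at_weighted_point:
  assumes "p + q \<noteq> 0"
  shows "(p + q)^3 * edge_field a b \<mu> (p / (p + q))
         = p * q * (p * a + q * b) - \<mu> * ((p - q) * (p + q)^2)"
proof -
  define x where "x = p / (p + q)"
  have "p = x * (p + q)" "q = (1 - x) * (p + q)"
    using assms by (simp_all add: x_def field_simps)
  then have "p * q * (p * a + q * b) - \<mu> * ((p - q) * (p + q)^2) =
      (x * (p + q)) * ((1 - x) * (p + q)) * ((x * (p + q)) * a + ((1 - x) * (p + q)) * b)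
      - \<mu> * ((x * (p + q) - (1 - x) * (p + q)) * (p + q)^2)"
    by simp
  also have "\<dots> = (p + q)^3 * edge_field a b \<mu> x"
    unfolding edge_field_def by algebra
  finally show ?thesis
    by (simp add: x_def)
qed

lemma edge_field_pos_at_weighted_point:
  assumes "p > 0" "q > 0" "a > 0" "b > 0" "0 < \<mu>" "\<mu> \<le> 1"
    and "(p - q) * (p + q)^2 < p * q * (p * a + q * b)"
  shows "edge_field a b \<mu> (p / (p + q)) > 0"
proof -
  have "(p + q)^3 * edge_field a b \<mu> (p / (p + q)) = p * q * (p * a + q * b) - \<mu> * ((p - q) * (p + q)^2)"
    using assms(1,2) by (simp add: edge_field_at_weighted_point)
  also have "\<mu> * ((p - q) * (p + q)^2) < p * q * (p * a + q * b)"
  proof (cases "p \<le> q")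
    case True
    then have "\<mu> * ((p - q) * (p + q)^2) \<le> 0"
      using assms(5) by (intro mult_nonneg_nonpos mult_nonpos_nonneg) auto
    also have "0 < p * q * (p * a + q * b)"
      using assms(1-4) by (simp add: add_pos_pos)
    finally show ?thesis .
  next
    case False
    then have "\<mu> * ((p - q) * (p + q)^2) \<le> (p - q) * (p + q)^2"
      using assms(5,6) by (intro mult_left_le_one_le) auto
    with assms(7) show ?thesis by linarith
  qed
  then have "0 < p * q * (p * a + q * b) - \<mu> * ((p - q) * (p + q)^2)"
    by simp
  finally show ?thesis
    using assms(1,2) by (simp add: zero_less_mult_iff)
qed

theorem lemma11:
  fixes a b c d \<theta> \<mu> :: real
  assumes "a > 0" "b > 0" "c > 0" "d > 0" "\<theta> > 0"
    and "- (\<theta> * a + \<theta>^2 * b) < (\<theta> - 1) * (\<theta> + 1)^2"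
    and "(\<theta> - 1) * (\<theta> + 1)^2 < \<theta> * c + \<theta>^2 * d"
    and "0 < \<mu>" "\<mu> \<le> 1"
  shows "(\<exists>!x. is_equilibrium a b c d \<theta> \<mu> x 0)
       \<and> (\<exists>!x. is_equilibrium a b c d \<theta> \<mu> x 1)
       \<and> (\<forall>x. is_equilibrium a b c d \<theta> \<mu> x 0 \<longrightarrow>
              max (1/2) (1/(\<theta>+1)) < x \<and> x < 1)
       \<and> (\<forall>x. is_equilibrium a b c d \<theta> \<mu> x 1 \<longrightarrow>
              0 < x \<and> x < min (1/2) (1/(\<theta>+1)))"
proof -
  obtain x\<^sub>b where x\<^sub>b: "x\<^sub>b \<in> {0..1}" "edge_field a b \<mu> x\<^sub>b = 0"
    using edge_field_root_exists[OF less_imp_le[OF assms(8)]] .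
  obtain x\<^sub>t where x\<^sub>t: "x\<^sub>t \<in> {0..1}" "edge_field d c \<mu> x\<^sub>t = 0"
    using edge_field_root_exists[OF less_imp_le[OF assms(8)]] .
  have bottom: "is_equilibrium a b c d \<theta> \<mu> x 0 \<longleftrightarrow> x = x\<^sub>b" for x
    unfolding is_equilibrium_bottom_iff using x\<^sub>b edge_field_root_unique[OF assms(1,2,8) _ _ x\<^sub>b] by blast
  have "is_equilibrium a b c d \<theta> \<mu> x 1 \<longleftrightarrow> 1 - x = x\<^sub>t" for x
    unfolding is_equilibrium_top_iff using x\<^sub>t edge_field_root_unique[OF assms(4,3,8) _ _ x\<^sub>t] by blast
  then have top: "is_equilibrium a b c d \<theta> \<mu> x 1 \<longleftrightarrow> x = 1 - x\<^sub>t" for x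
    by (simp only:) arith
  have "(1 - \<theta>) * (1 + \<theta>)^2 < 1 * \<theta> * (1 * a + \<theta> * b)"
    using assms(6) by (simp add: algebra_simps power2_eq_square)
  then have "edge_field a b \<mu> (1 / (1 + \<theta>)) > 0"
    using assms by (intro edge_field_pos_at_weighted_point) auto
  then have "1 / (\<theta> + 1) < x\<^sub>b"
    using edge_field_pos_imp_less_root[OF assms(1,2,8) _ _ x\<^sub>b] assms(5) by (simp add: add.commute)
  moreover have "(\<theta> - 1) * (\<theta> + 1)^2 < \<theta> * 1 * (\<theta> * d + 1 * c)"
    using assms(7) by (simp add: algebra_simps power2_eq_square)
  then have "edge_field d c \<mu> (\<theta> / (\<theta> + 1)) > 0"
    using assms by (intro edge_field_pos_at_weighted_point) auto
  then have "\<theta> / (\<theta> + 1) < x\<^sub>t"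
    using edge_field_pos_imp_less_root[OF assms(4,3,8) _ _ x\<^sub>t] assms(5) by simp
  then have "1 - x\<^sub>t < 1 / (\<theta> + 1)"
    using assms(5) by (simp add: field_simps)
  ultimately show ?thesis
    using edge_field_root_bounds[OF assms(1,2,8) x\<^sub>b] edge_field_root_bounds[OF assms(4,3,8) x\<^sub>t]
    by (simp add: bottom top)
qed

end
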